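(* Suppose $P_{II*}\subseteq P_{II}$ is a chain (totally ordered by inclusion). Then $\mathcal C_{\Xi\text{-unc}}\neq\emptyset$ for every filter $\Xi\in P_{III*}$.
   Context: Let $n\ge1$, $L=\{1,\dots,n\}$, and for $i\in L$ let $\mathcal H_i$ be a Hilbert space with $1<\dim\mathcal H_i<\infty$; $\mathcal H_X=\bigotimes_{i\in X}\mathcal H_i$ and $\mathcal D_X$ is the set of density operators on $\mathcal H_X$. $P_I$ is the set of partitions of $L$ ordered by refinement. For $\xi\in P_I$, $\mathcal D_{\xi\text{-unc}}=\{\varrho\in\mathcal D_L:\varrho=\bigotimes_{X\in\xi}\varrho_X,\ \varrho_X\in\mathcal D_X\}$, and for $S\subseteq P_I$, $\mathcal D_{S\text{-unc}}=\bigcup_{\xi\in S}\mathcal D_{\xi\text{-unc}}$. $P_{II}$ is the set of nonempty down-sets of $P_I$, ordered by inclusion; $P_{II*}$ is a nonempty subset of $P_{II}$ and $P_{III*}$ is the set of nonempty up-sets of $P_{II*}$. For $\Xi\in P_{III*}$: $\overline\Xi=P_{II*}\setminus\Xi$ and $\mathcal C_{\Xi\text{-unc}}=\bigcap_{\boldsymbol\xi'\in\overline\Xi}(\mathcal D_L\setminus\mathcal D_{\boldsymbol\xi'\text{-unc}})\cap\bigcap_{\boldsymbol\xi\in\Xi}\mathcal D_{\boldsymbol\xi\text{-unc}}$. *)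

theory Defs
  imports Complex_Main "HOL-Library.FuncSet" "HOL-Library.Disjoint_Sets"
begin

text \<open>Finite-dimensional Hilbert space H_i is modelled as C^(d i) with its standard
  basis; H_X = tensor product over i in X has orthonormal basis indexed by
  extensional tuples a in PiE X (%i. {..<d i}). Operators on H_X are matrices
  indexed by such tuples (entries outside the index set are required to vanish).\<close>

type_synonym idx = "nat \<Rightarrow> nat"
type_synonym mat = "idx \<Rightarrow> idx \<Rightarrow> complex"

definition basis_idx :: "(nat \<Rightarrow> nat) \<Rightarrow> nat set \<Rightarrow> idx set" where
  "basis_idx d X = (\<Pi>\<^sub>E i\<in>X. {..<d i})"

definition density_ops :: "(nat \<Rightarrow> nat) \<Rightarrow> nat set \<Rightarrow> mat set" where
  "density_ops d X = {\<rho>.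
     (\<forall>a b. (a \<notin> basis_idx d X \<or> b \<notin> basis_idx d X) \<longrightarrow> \<rho> a b = 0) \<and>
     (\<forall>v :: idx \<Rightarrow> complex.
        let q = (\<Sum>a\<in>basis_idx d X. \<Sum>b\<in>basis_idx d X. cnj (v a) * \<rho> a b * v b)
        in Im q = 0 \<and> Re q \<ge> 0) \<and>
     (\<Sum>a\<in>basis_idx d X. \<rho> a a) = 1}"

definition P_I :: "nat \<Rightarrow> nat set set set" where
  "P_I n = {\<xi>. partition_on {1..n} \<xi>}"

definition refines :: "nat set set \<Rightarrow> nat set set \<Rightarrow> bool" where
  "refines \<xi> \<eta> \<longleftrightarrow> (\<forall>X\<in>\<xi>. \<exists>Y\<in>\<eta>. X \<subseteq> Y)"

definition D_unc :: "(nat \<Rightarrow> nat) \<Rightarrow> nat \<Rightarrow> nat set set \<Rightarrow> mat set" where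
  "D_unc d n \<xi> = {\<rho> \<in> density_ops d {1..n}. \<exists>\<rho>X :: nat set \<Rightarrow> mat.
      (\<forall>X\<in>\<xi>. \<rho>X X \<in> density_ops d X) \<and>
      (\<forall>a\<in>basis_idx d {1..n}. \<forall>b\<in>basis_idx d {1..n}.
          \<rho> a b = (\<Prod>X\<in>\<xi>. \<rho>X X (restrict a X) (restrict b X)))}"

definition D_S_unc :: "(nat \<Rightarrow> nat) \<Rightarrow> nat \<Rightarrow> nat set set set \<Rightarrow> mat set" where
  "D_S_unc d n S = (\<Union>\<xi>\<in>S. D_unc d n \<xi>)"

definition P_II :: "nat \<Rightarrow> nat set set set set" where
  "P_II n = {S. S \<subseteq> P_I n \<and> S \<noteq> {} \<and>
     (\<forall>\<eta>\<in>S. \<forall>\<xi>\<in>P_I n. refines \<xi> \<eta> \<longrightarrow> \<xi> \<in> S)}"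

definition P_III :: "nat set set set set \<Rightarrow> nat set set set set set" where
  "P_III P2s = {\<Xi>. \<Xi> \<subseteq> P2s \<and> \<Xi> \<noteq> {} \<and>
     (\<forall>a\<in>\<Xi>. \<forall>b\<in>P2s. a \<subseteq> b \<longrightarrow> b \<in> \<Xi>)}"

definition is_filter :: "nat set set set set \<Rightarrow> nat set set set set \<Rightarrow> bool" where
  "is_filter P2s \<Xi> \<longleftrightarrow> \<Xi> \<in> P_III P2s \<and>
     (\<forall>a\<in>\<Xi>. \<forall>b\<in>\<Xi>. \<exists>c\<in>\<Xi>. c \<subseteq> a \<and> c \<subseteq> b)"

definition C_unc :: "(nat \<Rightarrow> nat) \<Rightarrow> nat \<Rightarrow> nat set set set set \<Rightarrow> nat set set set set \<Rightarrow> mat set" where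
  "C_unc d n P2s \<Xi> =
     {\<rho> \<in> density_ops d {1..n}.
        (\<forall>\<xi>'\<in>P2s - \<Xi>. \<rho> \<notin> D_S_unc d n \<xi>') \<and> (\<forall>\<xi>\<in>\<Xi>. \<rho> \<in> D_S_unc d n \<xi>)}"

end

theory Submission
  imports Defs
begin

text \<open>Since \<open>P2s\<close> is a finite chain of nonempty sets, the up-set \<open>\<Xi>\<close> has a least member
  \<open>\<Inter>\<Xi>\<close>, and the complement \<open>P2s - \<Xi>\<close>, if nonempty, has its union as largest member; so some partition
  \<open>\<xi>\<close> lies in every member of \<open>\<Xi>\<close> and in no member of the complement. Take the diagonal
  state which, independently on each block of \<open>\<xi>\<close>, is the equal mixture of the all-0 and
  the all-1 basis vector. It is \<open>\<xi>\<close>-uncorrelated, but it is \<open>\<eta>\<close>-uncorrelated only if \<open>\<xi>\<close>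
  refines \<open>\<eta>\<close>: in a product state over \<open>\<eta>\<close> the diagonal weights of two basis vectors may
  exchange their parts on a block \<open>Y\<close> of \<open>\<eta>\<close>, and if a block of \<open>\<xi>\<close> straddles \<open>Y\<close> this
  turns the all-0 and all-1 vectors into vectors of weight zero. Since the members of \<open>P2s\<close>
  are down-sets, the state therefore lies in exactly the members of \<open>\<Xi>\<close>.\<close>

lemma upset_of_finite_chain_separated:
  fixes C U :: "'a set set"
  assumes "finite C" and chain: "\<forall>A\<in>C. \<forall>B\<in>C. A \<subseteq> B \<or> B \<subseteq> A" and "{} \<notin> C"
    and "U \<subseteq> C" "U \<noteq> {}" and up: "\<forall>A\<in>U. \<forall>B\<in>C. A \<subseteq> B \<longrightarrow> B \<in> U"
  obtains x where "\<forall>A\<in>U. x \<in> A" "\<forall>B\<in>C - U. x \<notin> B"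
proof -
  have "subset.chain C U" "subset.chain C (C - U)"
    using chain \<open>U \<subseteq> C\<close> by (auto simp: subset_chain_def)
  note chains = this
  have least: "\<Inter>U \<in> U"
    using Inter_in_chain[OF finite_subset[OF \<open>U \<subseteq> C\<close> \<open>finite C\<close>] \<open>U \<noteq> {}\<close> chains(1)] .
  have "\<not> \<Inter>U \<subseteq> \<Union>(C - U)"
  proof
    assume sub: "\<Inter>U \<subseteq> \<Union>(C - U)"
    show False
    proof (cases "C - U = {}")
      case True
      then show False using sub least \<open>{} \<notin> C\<close> \<open>U \<subseteq> C\<close> by auto
    next
      case False
      then have "\<Union>(C - U) \<in> C - U"
        using Union_in_chain[OF _ False chains(2)] \<open>finite C\<close> by blast
      then show False using sub least up by blast
    qed
  qed
  then show thesis using that by blast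
qed

lemma finite_basis_idx: "finite X \<Longrightarrow> finite (basis_idx d X)"
  unfolding basis_idx_def by (rule finite_PiE) auto

lemma extensional_eq_on_partition:
  assumes "partition_on L \<xi>" "a \<in> extensional L" "b \<in> extensional L"
    and "\<forall>X\<in>\<xi>. restrict a X = restrict b X"
  shows "a = b"
proof (rule extensionalityI[OF assms(2,3)])
  fix i assume "i \<in> L"
  then obtain X where "X \<in> \<xi>" "i \<in> X"
    using partition_onD1[OF assms(1)] by blast
  then show "a i = b i" using assms(4) by (metis restrict_apply')
qed

definition const_idx :: "nat set \<Rightarrow> nat \<Rightarrow> idx" where
  "const_idx X c = restrict (\<lambda>_. c) X"

lemma const_idx_in_basis_idx: "\<forall>i\<in>X. c < d i \<Longrightarrow> const_idx X c \<in> basis_idx d X"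
  unfolding const_idx_def basis_idx_def by (auto simp: restrict_PiE_iff)

lemma const_idx_eq_iff: "X \<noteq> {} \<Longrightarrow> const_idx X c = const_idx X c' \<longleftrightarrow> c = c'"
  unfolding const_idx_def by (metis ex_in_conv restrict_apply')

lemma restrict_const_idx: "X \<subseteq> L \<Longrightarrow> restrict (const_idx L c) X = const_idx X c"
  unfolding const_idx_def by (auto simp: fun_eq_iff)

definition uniform_state :: "idx set \<Rightarrow> mat" where
  "uniform_state A = (\<lambda>a b. if a = b \<and> a \<in> A then 1 / of_nat (card A) else 0)"

lemma uniform_state_density:
  assumes "finite X" "A \<noteq> {}" "A \<subseteq> basis_idx d X"
  shows "uniform_state A \<in> density_ops d X"
proof -
  let ?B = "basis_idx d X"
  have finB: "finite ?B" using assms(1) by (rule finite_basis_idx)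
  have finA: "finite A" using finite_subset[OF assms(3) finB] .
  have "Im q = 0 \<and> Re q \<ge> 0"
    if q: "q = (\<Sum>a\<in>?B. \<Sum>b\<in>?B. cnj (v a) * uniform_state A a b * v b)" for q v
  proof -
    have "q = (\<Sum>a\<in>?B. of_real (if a \<in> A then (cmod (v a))\<^sup>2 / card A else 0))"
      unfolding q
    proof (rule sum.cong[OF refl])
      fix a assume a: "a \<in> ?B"
      have "(\<Sum>b\<in>?B. cnj (v a) * uniform_state A a b * v b)
          = (\<Sum>b\<in>?B. if b = a then (if a \<in> A then cnj (v a) * v a / card A else 0) else 0)"
        by (rule sum.cong) (auto simp: uniform_state_def)
      also have "\<dots> = of_real (if a \<in> A then (cmod (v a))\<^sup>2 / card A else 0)"
        using finB a by (simp add: complex_norm_square[symmetric] mult.commute)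
      finally show "(\<Sum>b\<in>?B. cnj (v a) * uniform_state A a b * v b)
          = of_real (if a \<in> A then (cmod (v a))\<^sup>2 / card A else 0)" .
    qed
    then show ?thesis by (simp add: sum_nonneg flip: of_real_sum)
  qed
  moreover have "(\<Sum>a\<in>?B. uniform_state A a a) = 1"
  proof -
    have "(\<Sum>a\<in>?B. uniform_state A a a) = (\<Sum>a\<in>?B. if a \<in> A then 1 / of_nat (card A) else 0)"
      by (simp add: uniform_state_def)
    also have "\<dots> = (\<Sum>a\<in>?B \<inter> A. 1 / of_nat (card A))"
      by (rule sum.inter_restrict[OF finB, symmetric])
    also have "?B \<inter> A = A" using assms(3) by blast
    also have "(\<Sum>a\<in>A. 1 / of_nat (card A)) = (1 :: complex)" using finA assms(2) by simp
    finally show ?thesis .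
  qed
  moreover have "uniform_state A a b = 0" if "a \<notin> ?B \<or> b \<notin> ?B" for a b
    using that assms(3) by (auto simp: uniform_state_def)
  ultimately show ?thesis unfolding density_ops_def Let_def by blast
qed

definition block_binary_idx :: "(nat \<Rightarrow> nat) \<Rightarrow> nat set \<Rightarrow> nat set set \<Rightarrow> idx set" where
  "block_binary_idx d L \<xi> =
     {a \<in> basis_idx d L. \<forall>X\<in>\<xi>. restrict a X \<in> {const_idx X 0, const_idx X 1}}"

definition block_indicator :: "nat set \<Rightarrow> nat set set \<Rightarrow> idx" where
  "block_indicator L T = restrict (\<lambda>i. if i \<in> \<Union>T then 1 else 0) L"

lemma restrict_block_indicator:
  assumes "partition_on L \<xi>" "T \<subseteq> \<xi>" "X \<in> \<xi>"
  shows "restrict (block_indicator L T) X = const_idx X (if X \<in> T then 1 else 0)"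
proof -
  have "i \<in> \<Union>T \<longleftrightarrow> X \<in> T" if "i \<in> X" for i
    using disjointD[OF partition_onD2[OF assms(1)]] assms(2,3) that by blast
  moreover have "X \<subseteq> L" using partition_onD1[OF assms(1)] assms(3) by blast
  ultimately show ?thesis by (auto simp: block_indicator_def const_idx_def fun_eq_iff)
qed

lemma bij_betw_block_indicator:
  assumes part: "partition_on L \<xi>" and d: "\<forall>i\<in>L. 1 < d i"
  shows "bij_betw (block_indicator L) (Pow \<xi>) (block_binary_idx d L \<xi>)"
proof (rule bij_betw_imageI)
  have nonempty: "X \<noteq> {}" if "X \<in> \<xi>" for X
    using partition_onD3[OF part] that by blast
  show "inj_on (block_indicator L) (Pow \<xi>)"
  proof (rule inj_onI)
    fix T T' assume T: "T \<in> Pow \<xi>" "T' \<in> Pow \<xi>" and eq: "block_indicator L T = block_indicator L T'"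
    have "X \<in> T \<longleftrightarrow> X \<in> T'" if "X \<in> \<xi>" for X
      using arg_cong[OF eq, of "\<lambda>a. restrict a X"] T that
      by (simp add: restrict_block_indicator[OF part] const_idx_eq_iff[OF nonempty[OF that]]
          split: if_splits)
    then show "T = T'" using T by blast
  qed
  have "block_indicator L T \<in> basis_idx d L" for T
    using d by (fastforce simp: block_indicator_def basis_idx_def restrict_PiE_iff)
  then have "block_indicator L ` Pow \<xi> \<subseteq> block_binary_idx d L \<xi>"
    by (auto simp: block_binary_idx_def restrict_block_indicator[OF part])
  moreover have "a \<in> block_indicator L ` Pow \<xi>" if a: "a \<in> block_binary_idx d L \<xi>" for a
  proof
    let ?T = "{X\<in>\<xi>. restrict a X = const_idx X 1}"
    show "?T \<in> Pow \<xi>" by blast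
    show "a = block_indicator L ?T"
    proof (rule extensional_eq_on_partition[OF part])
      show "a \<in> extensional L" "block_indicator L ?T \<in> extensional L"
        using a by (auto simp: block_binary_idx_def basis_idx_def block_indicator_def PiE_iff)
      show "\<forall>X\<in>\<xi>. restrict a X = restrict (block_indicator L ?T) X"
        using a by (auto simp: block_binary_idx_def restrict_block_indicator[OF part])
    qed
  qed
  ultimately show "block_indicator L ` Pow \<xi> = block_binary_idx d L \<xi>" by blast
qed

lemma card_block_binary_idx:
  assumes "finite L" "partition_on L \<xi>" "\<forall>i\<in>L. 1 < d i"
  shows "card (block_binary_idx d L \<xi>) = 2 ^ card \<xi>"
  using bij_betw_same_card[OF bij_betw_block_indicator[OF assms(2,3)]]
    card_Pow[OF finite_elements[OF assms(1,2)]] by simp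

definition block_correlated_state :: "(nat \<Rightarrow> nat) \<Rightarrow> nat set \<Rightarrow> nat set set \<Rightarrow> mat" where
  "block_correlated_state d L \<xi> = uniform_state (block_binary_idx d L \<xi>)"

lemma block_correlated_state_eq_prod:
  assumes fin: "finite L" and part: "partition_on L \<xi>" and d: "\<forall>i\<in>L. 1 < d i"
    and a: "a \<in> basis_idx d L" and b: "b \<in> basis_idx d L"
  shows "block_correlated_state d L \<xi> a b
       = (\<Prod>X\<in>\<xi>. uniform_state {const_idx X 0, const_idx X 1} (restrict a X) (restrict b X))"
proof (cases "a = b \<and> a \<in> block_binary_idx d L \<xi>")
  case True
  have "card {const_idx X 0, const_idx X 1} = 2" if "X \<in> \<xi>" for X
  proof -
    have "X \<noteq> {}" using partition_onD3[OF part] that by blast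
    then show ?thesis by (simp add: const_idx_eq_iff)
  qed
  then have "uniform_state {const_idx X 0, const_idx X 1} (restrict a X) (restrict b X) = 1 / 2"
    if "X \<in> \<xi>" for X
    using True that by (auto simp: uniform_state_def block_binary_idx_def)
  then have "(\<Prod>X\<in>\<xi>. uniform_state {const_idx X 0, const_idx X 1} (restrict a X) (restrict b X))
      = (\<Prod>X\<in>\<xi>. 1 / 2)"
    by (rule prod.cong[OF refl])
  moreover have "block_correlated_state d L \<xi> a b = 1 / 2 ^ card \<xi>"
    using True card_block_binary_idx[OF fin part d]
    by (auto simp: block_correlated_state_def uniform_state_def)
  ultimately show ?thesis by (simp add: power_one_over)
next
  case False
  have "\<exists>X\<in>\<xi>. restrict a X \<noteq> restrict b X \<or> restrict a X \<notin> {const_idx X 0, const_idx X 1}"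
  proof (cases "a = b")
    case True
    then show ?thesis using False a by (auto simp: block_binary_idx_def)
  next
    case False
    then show ?thesis
      using extensional_eq_on_partition[OF part, of a b] a b by (auto simp: basis_idx_def PiE_iff)
  qed
  then have "(\<Prod>X\<in>\<xi>. uniform_state {const_idx X 0, const_idx X 1} (restrict a X) (restrict b X)) = 0"
    using finite_elements[OF fin part] by (auto simp: uniform_state_def)
  moreover have "block_correlated_state d L \<xi> a b = 0"
    using False by (auto simp: block_correlated_state_def uniform_state_def)
  ultimately show ?thesis by simp
qed

lemma block_correlated_state_in_D_unc:
  assumes part: "partition_on {1..n} \<xi>" and d: "\<forall>i\<in>{1..n}. 1 < d i"
  shows "block_correlated_state d {1..n} \<xi> \<in> D_unc d n \<xi>"
proof -
  have "block_binary_idx d {1..n} \<xi> \<noteq> {}"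
    using card_block_binary_idx[OF finite_atLeastAtMost part d] by (metis card.empty power_not_zero zero_neq_numeral)
  then have "block_correlated_state d {1..n} \<xi> \<in> density_ops d {1..n}"
    unfolding block_correlated_state_def
    by (intro uniform_state_density) (auto simp: block_binary_idx_def)
  moreover have "uniform_state {const_idx X 0, const_idx X 1} \<in> density_ops d X" if "X \<in> \<xi>" for X
  proof -
    have "X \<subseteq> {1..n}" "X \<noteq> {}" using partition_onD1[OF part] partition_onD3[OF part] that by auto
    moreover from d \<open>X \<subseteq> {1..n}\<close> have "\<forall>i\<in>X. 0 < d i" "\<forall>i\<in>X. 1 < d i" by fastforce+
    ultimately show ?thesis
      by (intro uniform_state_density) (auto simp: finite_subset intro!: const_idx_in_basis_idx)
  qed
  ultimately show ?thesis
    unfolding D_unc_def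
    using block_correlated_state_eq_prod[OF finite_atLeastAtMost part d]
    by (intro CollectI conjI exI[of _ "\<lambda>X. uniform_state {const_idx X 0, const_idx X 1}"]) auto
qed

definition splice_idx :: "nat set \<Rightarrow> idx \<Rightarrow> idx \<Rightarrow> idx" where
  "splice_idx Y a b = (\<lambda>i. if i \<in> Y then a i else b i)"

lemma splice_idx_in_basis_idx:
  "a \<in> basis_idx d L \<Longrightarrow> b \<in> basis_idx d L \<Longrightarrow> splice_idx Y a b \<in> basis_idx d L"
  unfolding basis_idx_def splice_idx_def by (auto simp: PiE_iff extensional_def)

lemma restrict_splice_idx:
  "X \<subseteq> Y \<Longrightarrow> restrict (splice_idx Y a b) X = restrict a X"
  "X \<inter> Y = {} \<Longrightarrow> restrict (splice_idx Y a b) X = restrict b X"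
  unfolding splice_idx_def by (auto simp: fun_eq_iff)

lemma D_unc_diagonal_exchange:
  assumes \<rho>: "\<rho> \<in> D_unc d n \<eta>" and part: "partition_on {1..n} \<eta>" and Y: "Y \<in> \<eta>"
    and a: "a \<in> basis_idx d {1..n}" and b: "b \<in> basis_idx d {1..n}"
  shows "\<rho> a a * \<rho> b b = \<rho> (splice_idx Y a b) (splice_idx Y a b) * \<rho> (splice_idx Y b a) (splice_idx Y b a)"
proof -
  obtain \<sigma> where \<sigma>: "\<And>a. a \<in> basis_idx d {1..n} \<Longrightarrow> \<rho> a a = (\<Prod>Z\<in>\<eta>. \<sigma> Z (restrict a Z) (restrict a Z))"
    using \<rho> unfolding D_unc_def by blast
  let ?s = "\<lambda>Z a. \<sigma> Z (restrict a Z) (restrict a Z)"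
  have "?s Z a * ?s Z b = ?s Z (splice_idx Y a b) * ?s Z (splice_idx Y b a)" if "Z \<in> \<eta>" for Z
  proof (cases "Z = Y")
    case True
    then show ?thesis by (simp add: restrict_splice_idx)
  next
    case False
    then have "Z \<inter> Y = {}" using disjointD[OF partition_onD2[OF part]] that Y by blast
    then show ?thesis by (simp add: restrict_splice_idx mult.commute)
  qed
  then show ?thesis
    using a b splice_idx_in_basis_idx[OF a b] splice_idx_in_basis_idx[OF b a]
    by (simp add: \<sigma> prod.distrib[symmetric])
qed

lemma block_correlated_state_not_in_D_unc:
  assumes part: "partition_on {1..n} \<xi>" and part': "partition_on {1..n} \<eta>"
    and d: "\<forall>i\<in>{1..n}. 1 < d i" and not_refines: "\<not> refines \<xi> \<eta>"
  shows "block_correlated_state d {1..n} \<xi> \<notin> D_unc d n \<eta>"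
proof
  let ?L = "{1..n}" and ?B = "block_binary_idx d {1..n} \<xi>"
  assume unc: "block_correlated_state d ?L \<xi> \<in> D_unc d n \<eta>"
  obtain X where X: "X \<in> \<xi>" "\<forall>Y\<in>\<eta>. \<not> X \<subseteq> Y"
    using not_refines unfolding refines_def by blast
  have XL: "X \<subseteq> ?L" using partition_onD1[OF part] X(1) by blast
  obtain i where i: "i \<in> X" using partition_onD3[OF part] X(1) by (metis ex_in_conv)
  obtain Y where Y: "Y \<in> \<eta>" "i \<in> Y" using partition_onD1[OF part'] XL i by blast
  obtain j where j: "j \<in> X" "j \<notin> Y" using X(2) Y(1) by blast
  define a0 a1 where "a0 = const_idx ?L 0" and "a1 = const_idx ?L 1"
  have basis: "a0 \<in> basis_idx d ?L" "a1 \<in> basis_idx d ?L"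
    unfolding a0_def a1_def using d by (fastforce intro!: const_idx_in_basis_idx)+
  have "restrict a0 Z = const_idx Z 0" "restrict a1 Z = const_idx Z 1" if "Z \<in> \<xi>" for Z
    using partition_onD1[OF part] that restrict_const_idx[of Z ?L] unfolding a0_def a1_def by blast+
  then have "a0 \<in> ?B" "a1 \<in> ?B"
    using basis by (auto simp: block_binary_idx_def)
  moreover have "card ?B \<noteq> 0" using card_block_binary_idx[OF _ part d] by simp
  ultimately have "block_correlated_state d ?L \<xi> a0 a0 \<noteq> 0" "block_correlated_state d ?L \<xi> a1 a1 \<noteq> 0"
    by (simp_all add: block_correlated_state_def uniform_state_def)
  moreover have "splice_idx Y a0 a1 \<notin> ?B"
  proof
    assume "splice_idx Y a0 a1 \<in> ?B"
    then obtain c where "restrict (splice_idx Y a0 a1) X = const_idx X c"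
      using X(1) by (auto simp: block_binary_idx_def)
    then have "splice_idx Y a0 a1 i = c" "splice_idx Y a0 a1 j = c"
      using i j by (metis const_idx_def restrict_apply')+
    moreover have "splice_idx Y a0 a1 i = 0" "splice_idx Y a0 a1 j = 1"
      using i j Y XL by (auto simp: splice_idx_def a0_def a1_def const_idx_def)
    ultimately show False by simp
  qed
  then have "block_correlated_state d ?L \<xi> (splice_idx Y a0 a1) (splice_idx Y a0 a1) = 0"
    by (simp add: block_correlated_state_def uniform_state_def)
  ultimately show False
    using D_unc_diagonal_exchange[OF unc part' Y(1) basis] by simp
qed

lemma block_correlated_state_in_D_S_unc_iff:
  assumes S: "S \<in> P_II n" and \<xi>: "\<xi> \<in> P_I n" and d: "\<forall>i\<in>{1..n}. 1 < d i"
  shows "block_correlated_state d {1..n} \<xi> \<in> D_S_unc d n S \<longleftrightarrow> \<xi> \<in> S"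
proof
  assume "block_correlated_state d {1..n} \<xi> \<in> D_S_unc d n S"
  then obtain \<eta> where \<eta>: "\<eta> \<in> S" "block_correlated_state d {1..n} \<xi> \<in> D_unc d n \<eta>"
    unfolding D_S_unc_def by blast
  then have "\<eta> \<in> P_I n" using S unfolding P_II_def by blast
  then have "refines \<xi> \<eta>"
    using block_correlated_state_not_in_D_unc \<xi> d \<eta>(2) unfolding P_I_def by blast
  then show "\<xi> \<in> S" using S \<eta>(1) \<xi> unfolding P_II_def by blast
next
  assume "\<xi> \<in> S"
  then show "block_correlated_state d {1..n} \<xi> \<in> D_S_unc d n S"
    using block_correlated_state_in_D_unc \<xi> d unfolding D_S_unc_def P_I_def by blast
qed

lemma finite_P_I: "finite (P_I n)"
proof (rule finite_subset)
  show "P_I n \<subseteq> Pow (Pow {1..n})" unfolding P_I_def by (auto dest: partition_onD1)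
qed simp

theorem proposition5:
  fixes n :: nat and d :: "nat \<Rightarrow> nat"
    and P2s :: "nat set set set set" and \<Xi> :: "nat set set set set"
  assumes "n \<ge> 1"
    and "\<forall>i\<in>{1..n}. 1 < d i"
    and "P2s \<subseteq> P_II n" and "P2s \<noteq> {}"
    and "\<forall>a\<in>P2s. \<forall>b\<in>P2s. a \<subseteq> b \<or> b \<subseteq> a"
    and "\<Xi> \<in> P_III P2s" and "is_filter P2s \<Xi>"
  shows "C_unc d n P2s \<Xi> \<noteq> {}"
proof -
  have \<Xi>: "\<Xi> \<subseteq> P2s" "\<Xi> \<noteq> {}" "\<forall>A\<in>\<Xi>. \<forall>B\<in>P2s. A \<subseteq> B \<longrightarrow> B \<in> \<Xi>"
    using assms(6) unfolding P_III_def by simp_all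
  have "S \<subseteq> P_I n" "S \<noteq> {}" if "S \<in> P2s" for S
    using assms(3) that unfolding P_II_def by blast+
  then have "P2s \<subseteq> Pow (P_I n)" "{} \<notin> P2s" by blast+
  moreover from this(1) have "finite P2s"
    using finite_P_I by (meson finite_Pow_iff finite_subset)
  ultimately obtain \<xi> where \<xi>: "\<forall>S\<in>\<Xi>. \<xi> \<in> S" "\<forall>S\<in>P2s - \<Xi>. \<xi> \<notin> S"
    using upset_of_finite_chain_separated[OF _ assms(5) _ \<Xi>] by blast
  have "\<xi> \<in> P_I n" using \<xi>(1) \<Xi>(1,2) \<open>P2s \<subseteq> Pow (P_I n)\<close> by blast
  let ?\<rho> = "block_correlated_state d {1..n} \<xi>"
  have "?\<rho> \<in> D_S_unc d n S \<longleftrightarrow> \<xi> \<in> S" if "S \<in> P2s" for S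
    using block_correlated_state_in_D_S_unc_iff \<open>\<xi> \<in> P_I n\<close> assms(2,3) that by blast
  moreover have "?\<rho> \<in> density_ops d {1..n}"
    using block_correlated_state_in_D_unc[OF _ assms(2)] \<open>\<xi> \<in> P_I n\<close>
    unfolding D_unc_def P_I_def by blast
  ultimately have "?\<rho> \<in> C_unc d n P2s \<Xi>"
    using \<xi> \<Xi>(1) unfolding C_unc_def by blast
  then show ?thesis by blast
qed

end
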